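(* Let $A$ be a physical system of dimension $m$ whose Hamiltonian has a non-degenerate Bohr spectrum, with energy eigenbasis $\{|x\rangle\}_{x\in[m]}$. Let $\rho=\sum_{x,x'}r_{xx'}|x\rangle\langle x'|$ and $\sigma=\sum_{x,x'}s_{xx'}|x\rangle\langle x'|$ be density matrices on $A$, and suppose $r_{xx'}\neq0$ for all $x,x'\in[m]$. Then there exists a time-translation covariant channel $\mathcal{E}:A\to A$ with $\sigma=\mathcal{E}(\rho)$ if and only if the $m\times m$ matrix $Q$ with entries $$q_{xy}=\begin{cases}\min\left\{1,\frac{s_{xx}}{r_{xx}}\right\}&\text{if }x=y,\\ \frac{s_{xy}}{r_{xy}}&\text{otherwise},\end{cases}$$ is positive semidefinite.
   Context: The Hamiltonian $H^A=\sum_x a_x|x\rangle\langle x|$ has a non-degenerate Bohr spectrum if for all $x,y,x',y'\in[m]$: $a_x-a_y=a_{x'}-a_{y'}$ holds iff ($x=x'$ and $y=y'$) or ($x=y$ and $x'=y'$). A channel $\mathcal{E}:A\to A$ is time-translation covariant if $\mathcal{E}(e^{-iH^At}\rho e^{iH^At})=e^{-iH^At}\mathcal{E}(\rho)e^{iH^At}$ for all $t\in\mathbb{R}$ and all states $\rho$. *)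

theory Defs
  imports Complex_Main "Jordan_Normal_Form.Matrix"
begin

text \<open>Index set [m] is rendered as {0..<m}; operators on A are complex m x m matrices.\<close>

definition nondeg_bohr :: "nat \<Rightarrow> (nat \<Rightarrow> real) \<Rightarrow> bool" where
  "nondeg_bohr m a \<longleftrightarrow> (\<forall>x<m. \<forall>y<m. \<forall>x'<m. \<forall>y'<m.
      (a x - a y = a x' - a y') \<longleftrightarrow> ((x = x' \<and> y = y') \<or> (x = y \<and> x' = y')))"

definition adj :: "complex mat \<Rightarrow> complex mat" where
  "adj A = mat (dim_col A) (dim_row A) (\<lambda>(i,j). cnj (A $$ (j,i)))"

definition psd :: "nat \<Rightarrow> complex mat \<Rightarrow> bool" where
  "psd n A \<longleftrightarrow> A \<in> carrier_mat n n \<and> A = adj A \<and>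
     (\<forall>v :: nat \<Rightarrow> complex. let q = (\<Sum>i<n. \<Sum>j<n. cnj (v i) * A $$ (i,j) * v j)
        in Im q = 0 \<and> Re q \<ge> 0)"

definition mtrace :: "complex mat \<Rightarrow> complex" where
  "mtrace A = (\<Sum>i<dim_row A. A $$ (i,i))"

definition density :: "nat \<Rightarrow> complex mat \<Rightarrow> bool" where
  "density m \<rho> \<longleftrightarrow> psd m \<rho> \<and> mtrace \<rho> = 1"

text \<open>(id_k \<otimes> E) applied to a (k*m) x (k*m) matrix, ordered with the ancilla index as outer
  index: row index a*m+x with a<k, x<m.\<close>
definition block :: "nat \<Rightarrow> complex mat \<Rightarrow> nat \<Rightarrow> nat \<Rightarrow> complex mat" where
  "block m X a b = mat m m (\<lambda>(x,y). X $$ (a*m+x, b*m+y))"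

definition id_tensor :: "nat \<Rightarrow> nat \<Rightarrow> (complex mat \<Rightarrow> complex mat) \<Rightarrow> complex mat \<Rightarrow> complex mat" where
  "id_tensor k m E X = mat (k*m) (k*m)
     (\<lambda>(i,j). E (block m X (i div m) (j div m)) $$ (i mod m, j mod m))"

definition linear_on :: "nat \<Rightarrow> (complex mat \<Rightarrow> complex mat) \<Rightarrow> bool" where
  "linear_on m E \<longleftrightarrow> (\<forall>A\<in>carrier_mat m m. \<forall>B\<in>carrier_mat m m. E (A + B) = E A + E B) \<and>
     (\<forall>A\<in>carrier_mat m m. \<forall>c. E (c \<cdot>\<^sub>m A) = c \<cdot>\<^sub>m E A)"

definition completely_positive :: "nat \<Rightarrow> (complex mat \<Rightarrow> complex mat) \<Rightarrow> bool" where
  "completely_positive m E \<longleftrightarrow> (\<forall>k X. psd (k*m) X \<longrightarrow> psd (k*m) (id_tensor k m E X))"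

definition channel :: "nat \<Rightarrow> (complex mat \<Rightarrow> complex mat) \<Rightarrow> bool" where
  "channel m E \<longleftrightarrow> linear_on m E \<and> (\<forall>A\<in>carrier_mat m m. E A \<in> carrier_mat m m) \<and>
     (\<forall>A\<in>carrier_mat m m. mtrace (E A) = mtrace A) \<and> completely_positive m E"

text \<open>e^{-iH t} for H = diag(a).\<close>
definition evol :: "nat \<Rightarrow> (nat \<Rightarrow> real) \<Rightarrow> real \<Rightarrow> complex mat" where
  "evol m a t = mat m m (\<lambda>(i,j). if i = j then exp (- \<i> * complex_of_real (a i * t)) else 0)"

definition tt_covariant :: "nat \<Rightarrow> (nat \<Rightarrow> real) \<Rightarrow> (complex mat \<Rightarrow> complex mat) \<Rightarrow> bool" where
  "tt_covariant m a E \<longleftrightarrow> (\<forall>t::real. \<forall>\<rho>. density m \<rho> \<longrightarrow>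
      E (evol m a t * \<rho> * adj (evol m a t)) = evol m a t * E \<rho> * adj (evol m a t))"

definition Qmat :: "nat \<Rightarrow> complex mat \<Rightarrow> complex mat \<Rightarrow> complex mat" where
  "Qmat m \<rho> \<sigma> = mat m m (\<lambda>(x,y). if x = y
      then complex_of_real (min 1 (Re (\<sigma> $$ (x,x)) / Re (\<rho> $$ (x,x))))
      else \<sigma> $$ (x,y) / \<rho> $$ (x,y))"

end

theory Submission
  imports Defs "HOL-Library.Complex_Order"
begin

text \<open>
  Conjugating by exp(-iHt) multiplies the (x,x') entry of a matrix by exp(-i(a x - a x')t). For a
  covariant channel E, the (y,y') entry of E |x><x'| must pick up the phase of (x,x') and that of
  (y,y') at the same time, so by the non-degenerate Bohr spectrum it vanishes unless
  (x,x') = (y,y') or x = x', y = y'. Hence E acts on off-diagonal entries as the Schur multiplier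
  M x y = <x|E(|x><y|)|y> and on the diagonal as the stochastic matrix P(y|x) = <y|E(|x><x|)|y>.
  M is a principal submatrix of the Choi matrix of E, hence positive semidefinite, and Q differs
  from M only on the diagonal, where M x x = P(x|x) is at most 1 (the P(.|x) sum to 1) and at most
  s_xx / r_xx (as s_xx is the sum of P(x|x') r_x'x'). So Q is M plus a nonnegative diagonal.

  Conversely, if Q is positive semidefinite, then A |-> Q o A + diag (T (diag A)) is a covariant
  channel mapping \<rho> to \<sigma>: the nonnegative matrix T moves the mass (1 - q_xx) r_xx that level x
  loses onto the deficits s_yy - q_yy r_yy, and the Schur multiplier Q o _ is completely positive
  because Q is a Gram matrix, q_xy = sum_l cnj (b_l x) b_l y, obtained by Schur-complement
  elimination.
\<close>

section \<open>Positive semidefinite kernels\<close>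

definition qform :: "nat \<Rightarrow> (nat \<Rightarrow> nat \<Rightarrow> complex) \<Rightarrow> (nat \<Rightarrow> complex) \<Rightarrow> complex" where
  "qform n A v = (\<Sum>i<n. \<Sum>j<n. cnj (v i) * A i j * v j)"

definition hermitian_fun :: "nat \<Rightarrow> (nat \<Rightarrow> nat \<Rightarrow> complex) \<Rightarrow> bool" where
  "hermitian_fun n A \<longleftrightarrow> (\<forall>i<n. \<forall>j<n. A i j = cnj (A j i))"

definition psd_fun :: "nat \<Rightarrow> (nat \<Rightarrow> nat \<Rightarrow> complex) \<Rightarrow> bool" where
  "psd_fun n A \<longleftrightarrow> hermitian_fun n A \<and> (\<forall>v. 0 \<le> qform n A v)"

lemma complex_nonneg_iff: "0 \<le> (q::complex) \<longleftrightarrow> Im q = 0 \<and> 0 \<le> Re q"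
  by (auto simp: less_eq_complex_def)

lemma complex_nonneg_eq_Re: "0 \<le> (z::complex) \<Longrightarrow> z = of_real (Re z)"
  by (simp add: complex_nonneg_iff complex_eq_iff)

lemma cnj_mult_self_nonneg: "0 \<le> cnj z * (z::complex)"
  using complex_norm_square[of z] by (simp add: less_eq_complex_def mult.commute)

lemma sum_if_zero: "(\<Sum>j\<in>S. if P then f j else 0) = (if P then (\<Sum>j\<in>S. f j) else 0)"
  by auto

lemma if_zero_simps [simp]:
  "(if P then a else 0) * b = (if P then a * b else 0)"
  "b * (if P then a else 0) = (if P then b * a else 0)"
  "cnj (if P then a else 0) = (if P then cnj a else 0)" for a b :: complex
  by auto

lemma psd_iff_psd_fun: "psd n A \<longleftrightarrow> A \<in> carrier_mat n n \<and> psd_fun n (\<lambda>i j. A $$ (i,j))"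
proof -
  have "A \<in> carrier_mat n n \<Longrightarrow> A = adj A \<longleftrightarrow> hermitian_fun n (\<lambda>i j. A $$ (i,j))"
    by (auto simp: adj_def hermitian_fun_def mat_eq_iff)
  then show ?thesis
    unfolding psd_def psd_fun_def qform_def Let_def complex_nonneg_iff by blast
qed

lemma hermitian_funD: "hermitian_fun n A \<Longrightarrow> i < n \<Longrightarrow> j < n \<Longrightarrow> A i j = cnj (A j i)"
  unfolding hermitian_fun_def by blast

lemma psd_funD:
  assumes "psd_fun n A"
  shows "hermitian_fun n A" "0 \<le> qform n A v"
  using assms unfolding psd_fun_def by blast+

lemma psd_fun_cong:
  assumes "psd_fun n A" "\<And>i j. i < n \<Longrightarrow> j < n \<Longrightarrow> A i j = B i j"
  shows "psd_fun n B"
proof -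
  have "qform n A = qform n B" unfolding qform_def using assms(2) by (intro ext sum.cong) auto
  then show ?thesis using assms unfolding psd_fun_def hermitian_fun_def by metis
qed

lemma qform_single:
  assumes "k < n"
  shows "qform n A (\<lambda>i. if i = k then \<alpha> else 0) = cnj \<alpha> * A k k * \<alpha>"
  unfolding qform_def using assms by (simp add: sum.delta sum_if_zero)

lemma qform_pair:
  assumes "k < n" "l < n" "k \<noteq> l"
  shows "qform n A (\<lambda>i. if i = k then \<alpha> else if i = l then \<beta> else 0) =
    cnj \<alpha> * A k k * \<alpha> + cnj \<alpha> * A k l * \<beta> + cnj \<beta> * A l k * \<alpha> + cnj \<beta> * A l l * \<beta>"
proof -
  have "\<And>i. (if i = k then \<alpha> else if i = l then \<beta> else 0) =
      (if i = k then \<alpha> else 0) + (if i = l then \<beta> else 0)"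
    using assms by auto
  then show ?thesis
    unfolding qform_def using assms
    by (simp add: distrib_left distrib_right sum.distrib sum.delta sum_if_zero algebra_simps
        cong: if_cong)
qed

lemma qform_add_single:
  assumes "k < n"
  shows "qform n A (\<lambda>i. v i + (if i = k then \<beta> else 0)) = qform n A v
    + cnj \<beta> * (\<Sum>j<n. A k j * v j) + (\<Sum>i<n. cnj (v i) * A i k) * \<beta> + cnj \<beta> * A k k * \<beta>"
  unfolding qform_def using assms
  by (simp add: ring_distribs sum.distrib sum.delta sum_if_zero sum_distrib_left
      sum_distrib_right mult.assoc)

lemma qform_add: "qform n (\<lambda>i j. A i j + B i j) v = qform n A v + qform n B v"
  unfolding qform_def by (simp add: ring_distribs sum.distrib)

lemma qform_unit_vectors_zero:
  assumes H: "\<And>u. (\<Sum>i<m. cnj (u i) * u i) = 1 \<Longrightarrow> qform m g u = 0"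
    and x: "x < m" and y: "y < m"
  shows "g x y = 0"
proof -
  have norm: "(\<Sum>i<m. cnj (u i) * u i) = qform m (\<lambda>i j. if i = j then 1 else 0) u" for u
    unfolding qform_def by (simp add: sum.delta')
  have diag: "g z z = 0" if "z < m" for z
    using H[of "\<lambda>i. if i = z then 1 else 0"] unfolding norm qform_single[OF that] by simp
  show ?thesis
  proof (cases "x = y")
    case False
    define s where "s = complex_of_real (1 / sqrt 2)"
    have ss: "cnj s * s = 1/2"
      unfolding s_def by (simp flip: of_real_mult)
    have pair: "cnj s * g x y * \<beta> + cnj \<beta> * g y x * s = 0" if "cnj \<beta> * \<beta> = 1/2" for \<beta>
    proof -
      have "qform m g (\<lambda>i. if i = x then s else if i = y then \<beta> else 0) = 0"
      proof (rule H)
        show "(\<Sum>i<m. cnj (if i = x then s else if i = y then \<beta> else 0) *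
            (if i = x then s else if i = y then \<beta> else 0)) = 1"
          unfolding norm qform_pair[OF x y False] using False by (simp add: that ss)
      qed
      then show ?thesis unfolding qform_pair[OF x y False] diag[OF x] diag[OF y] by simp
    qed
    have "cnj s * s * (g x y + g y x) = 0"
      using pair[OF ss] by (simp add: algebra_simps)
    moreover have "\<i> * (cnj s * s) * (g x y - g y x) = 0"
      using pair[of "\<i> * s"] ss by (simp add: algebra_simps)
    ultimately have "g x y + g y x = 0" "g x y - g y x = 0" unfolding ss by simp_all
    then show ?thesis by (simp add: add_eq_0_iff2)
  qed (use diag x in simp)
qed

lemma psd_fun_diag_nonneg:
  assumes "psd_fun n A" "k < n"
  shows "0 \<le> A k k"
  using psd_funD(2)[OF assms(1), of "\<lambda>i. if i = k then 1 else 0"] qform_single[OF assms(2)] by simp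

lemma psd_fun_zero_diag_row:
  assumes P: "psd_fun n A" and k: "k < n" and z: "A k k = 0" and l: "l < n"
  shows "A k l = 0"
proof (rule ccontr)
  assume "A k l \<noteq> 0"
  define c where "c = A k l"
  define d where "d = Re (A l l)"
  define s where "s = 1 / (d + 1)"
  define N2 where "N2 = (cmod c)\<^sup>2"
  define t where "t = - of_real s * cnj c"
  have kl: "k \<noteq> l" using \<open>A k l \<noteq> 0\<close> z by auto
  have dl: "A l l = of_real d" "0 \<le> d"
    using psd_fun_diag_nonneg[OF P l] unfolding d_def
    by (auto simp: complex_nonneg_iff complex_eq_iff)
  have s: "0 < s" "s * d < 1" using dl unfolding s_def by (auto simp: field_simps)
  have N2: "0 < N2" using \<open>A k l \<noteq> 0\<close> unfolding N2_def c_def by auto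
  have cc: "c * cnj c = of_real N2" unfolding N2_def using complex_norm_square by simp
  have lk: "A l k = cnj c" using hermitian_funD[OF psd_funD(1)[OF P] l k] unfolding c_def .
  have "0 \<le> qform n A (\<lambda>i. if i = k then 1 else if i = l then t else 0)"
    using psd_funD(2)[OF P] .
  also have "\<dots> = c * t + cnj t * cnj c + cnj t * A l l * t"
    using qform_pair[OF k l kl, of A 1 t] z lk unfolding c_def by simp
  also have "\<dots> = of_real (N2 * s * (s * d - 2))"
    unfolding t_def dl(1) using cc by (simp add: algebra_simps) (simp add: mult.assoc[symmetric] cc)
  finally have "0 \<le> N2 * s * (s * d - 2)" by (simp add: complex_nonneg_iff)
  moreover have "N2 * s * (s * d - 2) < 0" using N2 s by (simp add: mult_pos_neg)
  ultimately show False by simp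
qed

lemma psd_fun_schur_complement:
  assumes P: "psd_fun n A" and k: "k < n" and nz: "A k k \<noteq> 0"
  shows "psd_fun n (\<lambda>x y. A x y - A x k * A k y / A k k)"
proof -
  have H: "hermitian_fun n A" using psd_funD(1)[OF P] .
  have real: "cnj (A k k) = A k k" using hermitian_funD[OF H k k] by simp
  have "hermitian_fun n (\<lambda>x y. A x y - A x k * A k y / A k k)"
    unfolding hermitian_fun_def
  proof (intro allI impI)
    fix i j assume ij: "i < n" "j < n"
    have "cnj (A j i) = A i j" "cnj (A j k) = A k j" "cnj (A k i) = A i k"
      using hermitian_funD[OF H ij(2,1)] hermitian_funD[OF H ij(2) k] hermitian_funD[OF H k ij(1)]
      by simp_all
    then show "A i j - A i k * A k j / A k k = cnj (A j i - A j k * A k i / A k k)"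
      using real by (simp add: mult.commute)
  qed
  moreover have "0 \<le> qform n (\<lambda>x y. A x y - A x k * A k y / A k k) v" for v
  proof -
    define \<gamma> where "\<gamma> = (\<Sum>j<n. A k j * v j)"
    have col: "(\<Sum>i<n. cnj (v i) * A i k) = cnj \<gamma>"
      unfolding \<gamma>_def using hermitian_funD[OF H _ k] by (auto intro: sum.cong)
    have "qform n (\<lambda>x y. A x y - A x k * A k y / A k k) v
        = (\<Sum>i<n. \<Sum>j<n. cnj (v i) * A i j * v j - (cnj (v i) * A i k) * (A k j * v j) / A k k)"
      unfolding qform_def by (intro sum.cong refl) (simp add: algebra_simps)
    also have "\<dots> = qform n A v - (\<Sum>i<n. cnj (v i) * A i k) * (\<Sum>j<n. A k j * v j) / A k k"
      unfolding qform_def by (simp add: sum_subtractf sum_product sum_divide_distrib)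
    also have "\<dots> = qform n A (\<lambda>i. v i + (if i = k then - \<gamma> / A k k else 0))"
      unfolding qform_add_single[OF k] col \<gamma>_def[symmetric] using nz real
      by (simp add: field_simps)
    finally show ?thesis using psd_funD(2)[OF P] by simp
  qed
  ultimately show ?thesis unfolding psd_fun_def by blast
qed

text \<open>Induction on the number k of leading rows already eliminated: each step splits off the
  rank-one term A x k A k y / A k k and passes to the Schur complement.\<close>

lemma psd_fun_gram_aux:
  assumes "psd_fun n A" "\<forall>x<n. \<forall>y<n. (x < k \<or> y < k) \<longrightarrow> A x y = 0"
  shows "\<exists>(L::nat) B. \<forall>x<n. \<forall>y<n. A x y = (\<Sum>l<L. cnj (B l x) * B l y)"
  using assms
proof (induction "n - k" arbitrary: k A)
  case 0
  then have "\<forall>x<n. \<forall>y<n. A x y = (\<Sum>l<0. cnj (A l x) * A l y)" by auto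
  then show ?case by blast
next
  case (Suc d)
  have k: "k < n" and d: "d = n - Suc k" using Suc(2) by arith+
  have H: "hermitian_fun n A" using psd_funD(1)[OF Suc(3)] .
  show ?case
  proof (cases "A k k = 0")
    case True
    have "A k y = 0" "A y k = 0" if "y < n" for y
      using psd_fun_zero_diag_row[OF Suc(3) k True that] hermitian_funD[OF H that k] by simp_all
    then have "\<forall>x<n. \<forall>y<n. (x < Suc k \<or> y < Suc k) \<longrightarrow> A x y = 0"
      using Suc(4) less_Suc_eq by auto
    then show ?thesis using Suc(1)[OF d Suc(3)] by blast
  next
    case False
    define q where "q = Re (A k k)"
    have q: "A k k = of_real (sqrt q) * of_real (sqrt q)" "0 < q"
      using psd_fun_diag_nonneg[OF Suc(3) k] False unfolding q_def
      by (auto simp: complex_nonneg_iff complex_eq_iff simp flip: of_real_mult)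
    define A' where "A' x y = A x y - A x k * A k y / A k k" for x y
    have "\<forall>x<n. \<forall>y<n. (x < Suc k \<or> y < Suc k) \<longrightarrow> A' x y = 0"
      using Suc(4) k False unfolding A'_def less_Suc_eq by auto
    then obtain B and L :: nat where B: "\<forall>x<n. \<forall>y<n. A' x y = (\<Sum>l<L. cnj (B l x) * B l y)"
      using Suc(1)[OF d psd_fun_schur_complement[OF Suc(3) k False]] unfolding A'_def by blast
    define B' where "B' l = (if l < L then B l else (\<lambda>y. A k y / of_real (sqrt q)))" for l
    have "A x y = (\<Sum>l<Suc L. cnj (B' l x) * B' l y)" if "x < n" "y < n" for x y
    proof -
      have "A x k * A k y / A k k = cnj (A k x / of_real (sqrt q)) * (A k y / of_real (sqrt q))"
        unfolding q(1) using hermitian_funD[OF H that(1) k] by simp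
      then show ?thesis using B that unfolding B'_def A'_def by (simp add: algebra_simps)
    qed
    then show ?thesis by blast
  qed
qed

lemma psd_fun_gram:
  assumes "psd_fun n A"
  shows "\<exists>(L::nat) B. \<forall>x<n. \<forall>y<n. A x y = (\<Sum>l<L. cnj (B l x) * B l y)"
  using psd_fun_gram_aux[OF assms, of 0] by simp

lemma psd_fun_add:
  assumes "psd_fun n A" "psd_fun n B"
  shows "psd_fun n (\<lambda>i j. A i j + B i j)"
proof -
  have "hermitian_fun n (\<lambda>i j. A i j + B i j)"
    unfolding hermitian_fun_def
  proof (intro allI impI)
    fix i j assume "i < n" "j < n"
    then have "A i j = cnj (A j i)" "B i j = cnj (B j i)"
      using hermitian_funD psd_funD(1) assms by blast+
    then show "A i j + B i j = cnj (A j i + B j i)" by simp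
  qed
  then show ?thesis
    using assms unfolding psd_fun_def qform_add by (simp add: add_nonneg_nonneg)
qed

lemma psd_fun_diag:
  assumes "\<And>i. i < n \<Longrightarrow> 0 \<le> D i"
  shows "psd_fun n (\<lambda>i j. if i = j then D i else 0)"
proof -
  have "qform n (\<lambda>i j. if i = j then D i else 0) v = (\<Sum>i<n. D i * (cnj (v i) * v i))" for v
    unfolding qform_def by (rule sum.cong[OF refl]) (simp add: sum.delta' algebra_simps)
  moreover have "hermitian_fun n (\<lambda>i j. if i = j then D i else 0)"
    using assms unfolding hermitian_fun_def by (auto simp: complex_nonneg_iff complex_eq_iff)
  ultimately show ?thesis
    unfolding psd_fun_def
    using assms by (auto intro!: sum_nonneg mult_nonneg_nonneg[OF _ cnj_mult_self_nonneg])
qed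

lemma psd_fun_mult_gram:
  assumes "psd_fun n A"
  shows "psd_fun n (\<lambda>i j. A i j * (\<Sum>l<L. cnj (b l i) * b l j))"
proof -
  have H: "hermitian_fun n A" using psd_funD(1)[OF assms] .
  have "qform n (\<lambda>i j. A i j * (\<Sum>l<L. cnj (b l i) * b l j)) v
      = (\<Sum>l<L. qform n A (\<lambda>i. b l i * v i))" for v
    unfolding qform_def sum_distrib_left sum_distrib_right
    by (simp add: sum.swap[of _ "{..<L}"] algebra_simps)
  moreover have "hermitian_fun n (\<lambda>i j. A i j * (\<Sum>l<L. cnj (b l i) * b l j))"
    unfolding hermitian_fun_def
  proof (intro allI impI)
    fix i j assume "i < n" "j < n"
    then have "A i j = cnj (A j i)" by (rule hermitian_funD[OF H])
    then show "A i j * (\<Sum>l<L. cnj (b l i) * b l j) = cnj (A j i * (\<Sum>l<L. cnj (b l j) * b l i))"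
      by (simp add: mult.commute)
  qed
  ultimately show ?thesis
    unfolding psd_fun_def using psd_funD(2)[OF assms] by (simp add: sum_nonneg)
qed

lemma sum_pushforward:
  fixes c g :: "nat \<Rightarrow> complex"
  assumes "\<And>i. i < k \<Longrightarrow> f i < n"
  shows "(\<Sum>x<n. (\<Sum>i<k. if f i = x then c i else 0) * g x) = (\<Sum>i<k. c i * g (f i))"
proof -
  have "(\<Sum>x<n. (\<Sum>i<k. if f i = x then c i else 0) * g x)
      = (\<Sum>i<k. \<Sum>x<n. if f i = x then c i * g x else 0)"
    unfolding sum_distrib_right if_zero_simps by (rule sum.swap)
  also have "\<dots> = (\<Sum>i<k. c i * g (f i))"
    using assms by (simp add: sum.delta')
  finally show ?thesis .
qed

lemma psd_fun_reindex:
  assumes P: "psd_fun n A" and f: "\<And>i. i < k \<Longrightarrow> f i < n"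
  shows "psd_fun k (\<lambda>i j. A (f i) (f j))"
proof -
  have "qform k (\<lambda>i j. A (f i) (f j)) v = qform n A w"
    if w: "w = (\<lambda>x. \<Sum>i<k. if f i = x then v i else 0)" for v w
  proof -
    have cw: "cnj (w x) = (\<Sum>i<k. if f i = x then cnj (v i) else 0)" for x
      unfolding w cnj_sum by simp
    have Aw: "(\<Sum>y<n. A x y * w y) = (\<Sum>j<k. A x (f j) * v j)" for x
      using sum_pushforward[OF f, where c = v and g = "A x"] unfolding w by (simp add: mult.commute)
    have "qform n A w = (\<Sum>x<n. cnj (w x) * (\<Sum>y<n. A x y * w y))"
      unfolding qform_def by (simp add: sum_distrib_left mult.assoc)
    also have "\<dots> = (\<Sum>i<k. cnj (v i) * (\<Sum>j<k. A (f i) (f j) * v j))"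
      unfolding cw Aw using sum_pushforward[OF f, where c = "\<lambda>i. cnj (v i)"] by simp
    also have "\<dots> = qform k (\<lambda>i j. A (f i) (f j)) v"
      unfolding qform_def by (simp add: sum_distrib_left mult.assoc)
    finally show ?thesis by simp
  qed
  moreover have "hermitian_fun k (\<lambda>i j. A (f i) (f j))"
    using hermitian_funD[OF psd_funD(1)[OF P] f f] unfolding hermitian_fun_def by blast
  ultimately show ?thesis
    using psd_funD(2)[OF P] unfolding psd_fun_def by simp
qed

lemma psd_add:
  assumes "psd n A" "psd n B"
  shows "psd n (A + B)"
proof -
  have A: "A \<in> carrier_mat n n" and B: "B \<in> carrier_mat n n"
    using assms unfolding psd_iff_psd_fun by blast+
  have "psd_fun n (\<lambda>i j. A $$ (i,j) + B $$ (i,j))"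
    using assms psd_fun_add unfolding psd_iff_psd_fun by blast
  then have "psd_fun n (\<lambda>i j. (A + B) $$ (i,j))"
    by (rule psd_fun_cong) (use A B in simp)
  then show ?thesis using A B unfolding psd_iff_psd_fun by simp
qed

lemma psd_outer: "psd n (mat n n (\<lambda>(i,j). u i * cnj (u j)))"
proof -
  have "0 \<le> qform n (\<lambda>i j. u i * cnj (u j)) v" for v
  proof -
    define z where "z = (\<Sum>i<n. cnj (v i) * u i)"
    have "qform n (\<lambda>i j. u i * cnj (u j)) v
        = (\<Sum>i<n. \<Sum>j<n. (cnj (v i) * u i) * cnj (cnj (v j) * u j))"
      unfolding qform_def by (intro sum.cong refl) (simp add: algebra_simps)
    also have "\<dots> = cnj z * z" unfolding z_def by (simp add: sum_product mult.commute)
    finally show ?thesis using cnj_mult_self_nonneg by simp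
  qed
  then have "psd_fun n (\<lambda>i j. u i * cnj (u j))"
    unfolding psd_fun_def hermitian_fun_def by simp
  then show ?thesis unfolding psd_iff_psd_fun by (auto intro: psd_fun_cong)
qed

lemma sum_blocks: "(\<Sum>i<k*m. h i) = (\<Sum>a<k. \<Sum>x<m. h (a*m+x))" for k m :: nat
proof (induction k)
  case (Suc k)
  have "{..<Suc k * m} = {..<k*m} \<union> {k*m..<k*m+m}" by auto
  then have "(\<Sum>i<Suc k*m. h i) = (\<Sum>i<k*m. h i) + (\<Sum>i\<in>{k*m..<k*m+m}. h i)"
    by (simp add: sum.union_disjoint ivl_disj_int)
  also have "(\<Sum>i\<in>{k*m..<k*m+m}. h i) = (\<Sum>x<m. h (k*m+x))"
    using sum.shift_bounds_nat_ivl[of h 0 "k*m" m] by (simp add: lessThan_atLeast0 add.commute)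
  finally show ?case using Suc by simp
qed simp

lemma block_index_less:
  assumes "a < k" "x < m"
  shows "a*m+x < k*(m::nat)"
proof -
  have "a*m+x < (a+1)*m" using assms(2) by simp
  also have "\<dots> \<le> k*m" using assms(1) by (intro mult_right_mono) auto
  finally show ?thesis .
qed

lemma qform_blocks: "qform (k*m) A v =
  (\<Sum>a<k. \<Sum>x<m. \<Sum>b<k. \<Sum>y<m. cnj (v (a*m+x)) * A (a*m+x) (b*m+y) * v (b*m+y))"
  unfolding qform_def sum_blocks ..

lemma hermitian_fun_blocksI:
  assumes "\<And>a b x y. a < k \<Longrightarrow> b < k \<Longrightarrow> x < m \<Longrightarrow> y < m \<Longrightarrow>
    A (a*m+x) (b*m+y) = cnj (A (b*m+y) (a*m+x))"
  shows "hermitian_fun (k*m) A"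
  unfolding hermitian_fun_def
proof (intro allI impI)
  fix i j assume ij: "i < k*m" "j < k*m"
  then have "0 < m" by (cases m) auto
  then have "i div m < k" "j div m < k" "i mod m < m" "j mod m < m"
    using ij by (auto simp: less_mult_imp_div_less)
  from assms[OF this] show "A i j = cnj (A j i)" by simp
qed

lemma id_tensor_blocks:
  assumes "a < k" "b < k" "x < m" "y < m"
  shows "id_tensor k m E X $$ (a*m+x, b*m+y) = E (block m X a b) $$ (x,y)"
  using assms by (simp add: id_tensor_def block_index_less)

section \<open>Channels\<close>

definition mat_unit :: "nat \<Rightarrow> nat \<Rightarrow> nat \<Rightarrow> complex mat" where
  "mat_unit m x y = mat m m (\<lambda>(i,j). if i = x \<and> j = y then 1 else 0)"

lemma mat_unit_carrier [simp]: "mat_unit m x y \<in> carrier_mat m m"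
  unfolding mat_unit_def by simp

lemma psd_mat_unit_diag: "psd m (mat_unit m x x)"
proof -
  have "mat_unit m x x = mat m m (\<lambda>(i,j). (if i = x then 1 else 0) * cnj (if j = x then 1 else 0))"
    unfolding mat_unit_def by (intro eq_matI) auto
  then show ?thesis using psd_outer by metis
qed

lemma linear_on_zero:
  assumes L: "linear_on m E" and "A \<in> carrier_mat m m" and "E A \<in> carrier_mat m m"
  shows "E (0\<^sub>m m m) = 0\<^sub>m m m"
proof -
  have "0\<^sub>m m m = (0::complex) \<cdot>\<^sub>m A" using assms(2) by (intro eq_matI) auto
  then have "E (0\<^sub>m m m) = 0 \<cdot>\<^sub>m E A" using L assms(2) unfolding linear_on_def by simp
  also have "\<dots> = 0\<^sub>m m m" using assms(3) by (intro eq_matI) auto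
  finally show ?thesis .
qed

lemma linear_on_expand:
  assumes L: "linear_on m E" and cl: "\<And>A. A \<in> carrier_mat m m \<Longrightarrow> E A \<in> carrier_mat m m"
    and A: "A \<in> carrier_mat m m" and y: "y < m" "y' < m"
  shows "E A $$ (y,y') = (\<Sum>x<m. \<Sum>x'<m. A $$ (x,x') * E (mat_unit m x x') $$ (y,y'))"
proof -
  define R where "R P = mat m m (\<lambda>(i,j). if (i,j) \<in> P then A $$ (i,j) else 0)" for P
  have R: "R P \<in> carrier_mat m m" for P unfolding R_def by simp
  have "E (R P) $$ (y,y') = (\<Sum>(x,x')\<in>P. A $$ (x,x') * E (mat_unit m x x') $$ (y,y'))"
    if "finite P" for P
    using that
  proof (induction P rule: finite_induct)
    case empty
    have "R {} = 0\<^sub>m m m" unfolding R_def by (intro eq_matI) auto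
    then show ?case using linear_on_zero[OF L A cl[OF A]] y by simp
  next
    case (insert p P)
    obtain i j where p: "p = (i,j)" by (cases p)
    have "R (insert p P) = R P + A $$ p \<cdot>\<^sub>m mat_unit m i j"
      unfolding R_def mat_unit_def p using insert(2) p by (intro eq_matI) auto
    then have "E (R (insert p P)) = E (R P) + A $$ p \<cdot>\<^sub>m E (mat_unit m i j)"
      using L R unfolding linear_on_def by simp
    moreover have "E (R P) \<in> carrier_mat m m" "E (mat_unit m i j) \<in> carrier_mat m m"
      using cl R by auto
    ultimately show ?case using insert p y by simp
  qed
  moreover have "A = R ({..<m} \<times> {..<m})" unfolding R_def using A by (intro eq_matI) auto
  ultimately show ?thesis by (simp add: sum.cartesian_product)
qed

lemma density_carrier: "density m A \<Longrightarrow> A \<in> carrier_mat m m"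
  unfolding density_def psd_def by blast

lemma density_diag_nonneg: "density m \<rho> \<Longrightarrow> x < m \<Longrightarrow> 0 \<le> \<rho> $$ (x,x)"
  using psd_fun_diag_nonneg unfolding density_def psd_iff_psd_fun by blast

lemma density_Re_diag_sum: "density m \<rho> \<Longrightarrow> (\<Sum>x<m. Re (\<rho> $$ (x,x))) = 1"
  using density_carrier[of m \<rho>] unfolding density_def mtrace_def by (simp flip: Re_sum)

lemma channelD:
  assumes "channel m E"
  shows "linear_on m E" "\<And>A. A \<in> carrier_mat m m \<Longrightarrow> E A \<in> carrier_mat m m"
    "\<And>A. A \<in> carrier_mat m m \<Longrightarrow> mtrace (E A) = mtrace A" "completely_positive m E"
  using assms unfolding channel_def by auto

lemma channel_psd:
  assumes C: "channel m E" and P: "psd m X"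
  shows "psd m (E X)"
proof -
  have X: "X \<in> carrier_mat m m" using P unfolding psd_def by blast
  have "block m X 0 0 = X" unfolding block_def using X by (intro eq_matI) auto
  then have "id_tensor 1 m E X = E X"
    unfolding id_tensor_def using channelD(2)[OF C X] by (intro eq_matI) auto
  moreover have "psd m (id_tensor 1 m E X)"
    using channelD(4)[OF C] P unfolding completely_positive_def by (metis mult_1)
  ultimately show ?thesis by simp
qed

lemma channel_choi_psd:
  assumes C: "channel m E"
  shows "psd_fun m (\<lambda>a b. E (mat_unit m a b) $$ (a,b))"
proof -
  \<comment> \<open>id \<otimes> E maps X = (\<Sum>a b. |a a\<rangle>\<langle>b b|) to the Choi matrix of E\<close>
  define u where "u i = (if i div m = i mod m then 1 else 0 :: complex)" for i
  define X where "X = mat (m*m) (m*m) (\<lambda>(i,j). u i * cnj (u j))"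
  have "psd (m*m) (id_tensor m m E X)"
    using channelD(4)[OF C] psd_outer unfolding X_def completely_positive_def by blast
  then have Y: "psd_fun (m*m) (\<lambda>i j. id_tensor m m E X $$ (i,j))"
    unfolding psd_iff_psd_fun by blast
  have "block m X a b = mat_unit m a b" if "a < m" "b < m" for a b
    unfolding block_def X_def mat_unit_def u_def using that
    by (intro eq_matI) (auto simp: block_index_less)
  then have "id_tensor m m E X $$ (a*m+a, b*m+b) = E (mat_unit m a b) $$ (a,b)"
    if "a < m" "b < m" for a b
    using id_tensor_blocks that by simp
  then show ?thesis
    using psd_fun_reindex[OF Y, of m "\<lambda>a. a*m+a"] block_index_less
    by (auto elim!: psd_fun_cong)
qed

lemma channel_transition_nonneg:
  assumes "channel m E" "x < m" "y < m"
  shows "0 \<le> E (mat_unit m x x) $$ (y,y)"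
  using psd_fun_diag_nonneg assms(3) channel_psd[OF assms(1) psd_mat_unit_diag]
  unfolding psd_iff_psd_fun by blast

lemma channel_transition_sum:
  assumes "channel m E" "x < m"
  shows "(\<Sum>y<m. E (mat_unit m x x) $$ (y,y)) = 1"
proof -
  have "(\<Sum>y<m. E (mat_unit m x x) $$ (y,y)) = mtrace (E (mat_unit m x x))"
    unfolding mtrace_def using carrier_matD(1)[OF channelD(2)[OF assms(1) mat_unit_carrier]] by simp
  also have "\<dots> = mtrace (mat_unit m x x)" using channelD(3)[OF assms(1) mat_unit_carrier] .
  also have "\<dots> = 1" unfolding mtrace_def mat_unit_def using assms(2) by (simp add: sum.delta)
  finally show ?thesis .
qed

section \<open>Covariant channels\<close>

definition phase :: "(nat \<Rightarrow> real) \<Rightarrow> real \<Rightarrow> nat \<Rightarrow> complex" where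
  "phase a t i = exp (- \<i> * complex_of_real (a i * t))"

lemma phase_eq_cis: "phase a t i = cis (- (a i * t))"
  unfolding phase_def by (simp add: cis_conv_exp)

lemma phase_mult_cnj: "phase a t i * cnj (phase a t j) = cis ((a j - a i) * t)"
  unfolding phase_eq_cis cis_cnj cis_mult by (simp add: algebra_simps)

lemma cis_separates:
  assumes "p \<noteq> q"
  obtains t where "cis (p * t) \<noteq> cis (q * t)"
proof
  define t where "t = pi / (p - q)"
  have "p * t = q * t + pi" using assms unfolding t_def by (simp add: field_simps)
  then have "cis (p * t) = - cis (q * t)" by (simp flip: cis_mult)
  then show "cis (p * t) \<noteq> cis (q * t)"
    using cis_neq_zero[of "q * t"] by auto
qed

lemma evol_conj:
  assumes A: "A \<in> carrier_mat m m"
  shows "evol m a t * A * adj (evol m a t) =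
    mat m m (\<lambda>(i,j). phase a t i * A $$ (i,j) * cnj (phase a t j))"
proof -
  have U: "evol m a t = mat m m (\<lambda>(i,j). if i = j then phase a t i else 0)"
    unfolding evol_def phase_def ..
  have Uadj: "adj (evol m a t) = mat m m (\<lambda>(i,j). if i = j then cnj (phase a t i) else 0)"
    unfolding U adj_def by (intro eq_matI) auto
  have UA: "evol m a t * A = mat m m (\<lambda>(i,j). phase a t i * A $$ (i,j))"
    using A unfolding U
    by (intro eq_matI) (simp_all add: scalar_prod_def lessThan_atLeast0 sum.delta)
  show ?thesis
    unfolding UA Uadj
    by (intro eq_matI) (simp_all add: scalar_prod_def lessThan_atLeast0 sum.delta')
qed

lemma tt_covariant_entry_identity:
  assumes C: "channel m E" and T: "tt_covariant m a E" and D: "density m D"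
    and y: "y < m" "y' < m"
  shows "(\<Sum>i<m. \<Sum>j<m. (phase a t i * cnj (phase a t j) - phase a t y * cnj (phase a t y'))
            * D $$ (i,j) * E (mat_unit m i j) $$ (y,y')) = 0"
proof -
  note L = channelD(1)[OF C] and cl = channelD(2)[OF C]
  define w where "w = phase a t"
  define \<phi> where "\<phi> i j = E (mat_unit m i j) $$ (y,y')" for i j
  have Dc: "D \<in> carrier_mat m m" using density_carrier[OF D] .
  have "E (evol m a t * D * adj (evol m a t)) = evol m a t * E D * adj (evol m a t)"
    using T D unfolding tt_covariant_def by blast
  then have "E (mat m m (\<lambda>(i,j). w i * D $$ (i,j) * cnj (w j))) $$ (y,y')
      = w y * E D $$ (y,y') * cnj (w y')"
    unfolding evol_conj[OF Dc] evol_conj[OF cl[OF Dc]] w_def using y by simp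
  moreover have "E (mat m m (\<lambda>(i,j). w i * D $$ (i,j) * cnj (w j))) $$ (y,y')
      = (\<Sum>i<m. \<Sum>j<m. w i * D $$ (i,j) * cnj (w j) * \<phi> i j)"
    unfolding \<phi>_def by (subst linear_on_expand[OF L cl _ y]) simp_all
  ultimately have "(\<Sum>i<m. \<Sum>j<m. w i * D $$ (i,j) * cnj (w j) * \<phi> i j)
      = w y * (\<Sum>i<m. \<Sum>j<m. D $$ (i,j) * \<phi> i j) * cnj (w y')"
    using linear_on_expand[OF L cl Dc y] unfolding \<phi>_def by simp
  then show ?thesis
    unfolding w_def[symmetric] \<phi>_def[symmetric]
    by (simp add: algebra_simps sum_subtractf sum_distrib_left sum_distrib_right)
qed

lemma tt_covariant_unit_entry_zero:
  assumes C: "channel m E" and T: "tt_covariant m a E" and nd: "nondeg_bohr m a"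
    and xs: "x < m" "x' < m" "y < m" "y' < m"
    and ne: "\<not> ((x = y \<and> x' = y') \<or> (x = x' \<and> y = y'))"
  shows "E (mat_unit m x x') $$ (y,y') = 0"
proof -
  have "a x' - a x \<noteq> a y' - a y" using nd xs ne unfolding nondeg_bohr_def by force
  then obtain t where t: "cis ((a x' - a x) * t) \<noteq> cis ((a y' - a y) * t)"
    by (rule cis_separates)
  define g where "g i j = (phase a t i * cnj (phase a t j) - phase a t y * cnj (phase a t y'))
    * E (mat_unit m i j) $$ (y,y')" for i j
  have "qform m g u = 0" if u: "(\<Sum>i<m. cnj (u i) * u i) = 1" for u
  proof -
    define D where "D = mat m m (\<lambda>(i,j). cnj (u i) * u j)"
    have "density m D"
      unfolding density_def mtrace_def D_def using psd_outer[of m "\<lambda>i. cnj (u i)"] u by simp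
    from tt_covariant_entry_identity[OF C T this xs(3,4), of t] show ?thesis
      unfolding qform_def g_def D_def by (simp add: algebra_simps)
  qed
  then have "g x x' = 0" using qform_unit_vectors_zero xs by blast
  then show ?thesis using t unfolding g_def phase_mult_cnj by simp
qed

lemma tt_covariant_channel_entry:
  assumes C: "channel m E" and T: "tt_covariant m a E" and nd: "nondeg_bohr m a"
    and A: "A \<in> carrier_mat m m" and y: "y < m" "y' < m"
  shows "E A $$ (y,y') = (if y = y' then (\<Sum>x<m. A $$ (x,x) * E (mat_unit m x x) $$ (y,y))
                          else A $$ (y,y') * E (mat_unit m y y') $$ (y,y'))"
proof -
  have zero: "E (mat_unit m x x') $$ (y,y') = 0"
    if "x < m" "x' < m" "\<not> ((x = y \<and> x' = y') \<or> (x = x' \<and> y = y'))" for x x'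
    using tt_covariant_unit_entry_zero[OF C T nd that(1,2) y that(3)] .
  have expand: "E A $$ (y,y') = (\<Sum>x<m. \<Sum>x'<m. A $$ (x,x') * E (mat_unit m x x') $$ (y,y'))"
    using linear_on_expand[OF channelD(1,2)[OF C] A y] .
  show ?thesis
  proof (cases "y = y'")
    case True
    have "E A $$ (y,y') = (\<Sum>x<m. \<Sum>x'<m.
        if x' = x then A $$ (x,x') * E (mat_unit m x x') $$ (y,y') else 0)"
      unfolding expand using zero True by (intro sum.cong refl) auto
    then show ?thesis using True by (simp add: sum.delta')
  next
    case False
    have "E A $$ (y,y') = (\<Sum>x<m. \<Sum>x'<m.
        if x = y then if x' = y' then A $$ (x,x') * E (mat_unit m x x') $$ (y,y') else 0 else 0)"
      unfolding expand using zero False by (intro sum.cong refl) auto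
    then show ?thesis using False y by (simp add: sum.delta sum_if_zero)
  qed
qed

lemma tt_covariant_channel_diag_le_Qmat:
  assumes nd: "nondeg_bohr m a" and dr: "density m \<rho>" and ds: "density m \<sigma>"
    and nz: "\<forall>x<m. \<forall>x'<m. \<rho> $$ (x,x') \<noteq> 0"
    and C: "channel m E" and T: "tt_covariant m a E" and S: "\<sigma> = E \<rho>" and x: "x < m"
  shows "E (mat_unit m x x) $$ (x,x) \<le> Qmat m \<rho> \<sigma> $$ (x,x)"
proof -
  define r where "r = Re (\<rho> $$ (x,x))"
  define s where "s = Re (\<sigma> $$ (x,x))"
  define p where "p = Re (E (mat_unit m x x) $$ (x,x))"
  have rsp: "\<rho> $$ (x,x) = of_real r" "\<sigma> $$ (x,x) = of_real s"
      "E (mat_unit m x x) $$ (x,x) = of_real p"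
    unfolding r_def s_def p_def
    using complex_nonneg_eq_Re density_diag_nonneg[OF dr x] density_diag_nonneg[OF ds x]
      channel_transition_nonneg[OF C x x] by blast+
  have "0 < r"
    using density_diag_nonneg[OF dr x] nz[rule_format, OF x x] unfolding rsp(1)
    by (auto simp: less_eq_complex_def)
  have "E (mat_unit m x x) $$ (x,x) \<le> (\<Sum>y<m. E (mat_unit m x x) $$ (y,y))"
    using channel_transition_nonneg[OF C x] x by (intro member_le_sum) auto
  then have "p \<le> 1"
    using channel_transition_sum[OF C x] unfolding rsp(3) by (simp add: less_eq_complex_def)
  have "\<rho> $$ (x,x) * E (mat_unit m x x) $$ (x,x)
      \<le> (\<Sum>x'<m. \<rho> $$ (x',x') * E (mat_unit m x' x') $$ (x,x))"
    using density_diag_nonneg[OF dr] channel_transition_nonneg[OF C _ x] x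
    by (intro member_le_sum mult_nonneg_nonneg) auto
  also have "\<dots> = \<sigma> $$ (x,x)"
    unfolding S using tt_covariant_channel_entry[OF C T nd density_carrier[OF dr] x x] by simp
  finally have "r * p \<le> s" unfolding rsp by (simp add: less_eq_complex_def)
  then have "p \<le> s / r" using \<open>0 < r\<close> by (simp add: field_simps)
  then show ?thesis
    using \<open>p \<le> 1\<close> x unfolding rsp(3) Qmat_def r_def s_def by (simp add: less_eq_complex_def)
qed

lemma tt_covariant_channel_Qmat_psd:
  assumes nd: "nondeg_bohr m a" and dr: "density m \<rho>" and ds: "density m \<sigma>"
    and nz: "\<forall>x<m. \<forall>x'<m. \<rho> $$ (x,x') \<noteq> 0"
    and C: "channel m E" and T: "tt_covariant m a E" and S: "\<sigma> = E \<rho>"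
  shows "psd m (Qmat m \<rho> \<sigma>)"
proof -
  define M where "M x y = E (mat_unit m x y) $$ (x,y)" for x y
  define Q where "Q x y = Qmat m \<rho> \<sigma> $$ (x,y)" for x y
  have "psd_fun m (\<lambda>x y. M x y + (if x = y then Q x x - M x x else 0))"
    using psd_fun_add[OF channel_choi_psd[OF C] psd_fun_diag]
      tt_covariant_channel_diag_le_Qmat[OF assms]
    unfolding M_def Q_def by simp
  moreover have "M x y + (if x = y then Q x x - M x x else 0) = Q x y" if "x < m" "y < m" for x y
    using tt_covariant_channel_entry[OF C T nd density_carrier[OF dr] that] nz that
    unfolding M_def Q_def Qmat_def S by simp
  ultimately have "psd_fun m Q" by (rule psd_fun_cong)
  then show ?thesis unfolding psd_iff_psd_fun Q_def Qmat_def by simp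
qed

section \<open>Construction of a covariant channel\<close>

definition schur_mult :: "nat \<Rightarrow> complex mat \<Rightarrow> complex mat \<Rightarrow> complex mat" where
  "schur_mult m Q A = mat m m (\<lambda>(y,y'). Q $$ (y,y') * A $$ (y,y'))"

definition diag_transfer :: "nat \<Rightarrow> (nat \<Rightarrow> nat \<Rightarrow> real) \<Rightarrow> complex mat \<Rightarrow> complex mat" where
  "diag_transfer m T A =
    mat m m (\<lambda>(y,y'). if y = y' then (\<Sum>x<m. of_real (T y x) * A $$ (x,x)) else 0)"

lemma schur_mult_carrier [simp]: "schur_mult m Q A \<in> carrier_mat m m"
  and schur_mult_dim [simp]: "dim_row (schur_mult m Q A) = m" "dim_col (schur_mult m Q A) = m"
  unfolding schur_mult_def by simp_all

lemma diag_transfer_carrier [simp]: "diag_transfer m T A \<in> carrier_mat m m"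
  and diag_transfer_dim [simp]:
    "dim_row (diag_transfer m T A) = m" "dim_col (diag_transfer m T A) = m"
  unfolding diag_transfer_def by simp_all

lemma linear_on_schur_mult: "linear_on m (schur_mult m Q)"
  unfolding linear_on_def schur_mult_def by (auto intro!: eq_matI simp: ring_distribs)

lemma linear_on_diag_transfer: "linear_on m (diag_transfer m T)"
  unfolding linear_on_def diag_transfer_def
  by (auto intro!: eq_matI simp: ring_distribs sum.distrib sum_distrib_left mult.left_commute)

lemma linear_on_add:
  assumes E: "linear_on m E" and F: "linear_on m F"
    and cE: "\<And>A. A \<in> carrier_mat m m \<Longrightarrow> E A \<in> carrier_mat m m"
    and cF: "\<And>A. A \<in> carrier_mat m m \<Longrightarrow> F A \<in> carrier_mat m m"
  shows "linear_on m (\<lambda>A. E A + F A)"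
  unfolding linear_on_def
proof (intro conjI ballI allI)
  fix A B :: "complex mat" assume A: "A \<in> carrier_mat m m" and B: "B \<in> carrier_mat m m"
  have "E (A + B) + F (A + B) = (E A + E B) + (F A + F B)"
    using E F A B unfolding linear_on_def by simp
  also have "\<dots> = (E A + F A) + (E B + F B)"
    using cE[OF A] cE[OF B] cF[OF A] cF[OF B] by (intro eq_matI) auto
  finally show "E (A + B) + F (A + B) = (E A + F A) + (E B + F B)" .
next
  fix A :: "complex mat" and c assume A: "A \<in> carrier_mat m m"
  then show "E (c \<cdot>\<^sub>m A) + F (c \<cdot>\<^sub>m A) = c \<cdot>\<^sub>m (E A + F A)"
    using E F cE[OF A] cF[OF A] unfolding linear_on_def by (simp add: add_smult_distrib_left_mat)
qed

lemma mtrace_schur_mult: "mtrace (schur_mult m Q A) = (\<Sum>x<m. Q $$ (x,x) * A $$ (x,x))"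
  unfolding mtrace_def schur_mult_def by simp

lemma mtrace_diag_transfer:
  "mtrace (diag_transfer m T A) = (\<Sum>x<m. (\<Sum>y<m. of_real (T y x)) * A $$ (x,x))"
proof -
  have "mtrace (diag_transfer m T A) = (\<Sum>y<m. \<Sum>x<m. of_real (T y x) * A $$ (x,x))"
    unfolding mtrace_def diag_transfer_def by simp
  also have "\<dots> = (\<Sum>x<m. \<Sum>y<m. of_real (T y x) * A $$ (x,x))" by (rule sum.swap)
  finally show ?thesis by (simp add: sum_distrib_right)
qed

lemma completely_positive_add:
  assumes "completely_positive m E" "completely_positive m F"
    and "\<And>A. A \<in> carrier_mat m m \<Longrightarrow> E A \<in> carrier_mat m m"
    and "\<And>A. A \<in> carrier_mat m m \<Longrightarrow> F A \<in> carrier_mat m m"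
  shows "completely_positive m (\<lambda>A. E A + F A)"
  unfolding completely_positive_def
proof (intro allI impI)
  fix k X assume "psd (k*m) X"
  then have "psd (k*m) (id_tensor k m E X + id_tensor k m F X)"
    using assms(1,2) psd_add unfolding completely_positive_def by blast
  moreover have "id_tensor k m (\<lambda>A. E A + F A) X = id_tensor k m E X + id_tensor k m F X"
  proof (rule eq_matI)
    fix i j assume "i < dim_row (id_tensor k m E X + id_tensor k m F X)"
      "j < dim_col (id_tensor k m E X + id_tensor k m F X)"
    then have ij: "i < k*m" "j < k*m" by (simp_all add: id_tensor_def)
    then have "0 < m" by (cases m) auto
    have "block m X (i div m) (j div m) \<in> carrier_mat m m" by (simp add: block_def)
    then have "E (block m X (i div m) (j div m)) \<in> carrier_mat m m"
      "F (block m X (i div m) (j div m)) \<in> carrier_mat m m"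
      using assms(3,4) by blast+
    then show "id_tensor k m (\<lambda>A. E A + F A) X $$ (i,j)
        = (id_tensor k m E X + id_tensor k m F X) $$ (i,j)"
      using ij \<open>0 < m\<close> by (simp add: id_tensor_def)
  qed (simp_all add: id_tensor_def)
  ultimately show "psd (k*m) (id_tensor k m (\<lambda>A. E A + F A) X)" by simp
qed

lemma completely_positive_schur_mult:
  assumes "psd m Q"
  shows "completely_positive m (schur_mult m Q)"
  unfolding completely_positive_def
proof (intro allI impI)
  fix k X assume "psd (k*m) X"
  then have X: "X \<in> carrier_mat (k*m) (k*m)" "psd_fun (k*m) (\<lambda>i j. X $$ (i,j))"
    unfolding psd_iff_psd_fun by blast+
  have "psd_fun m (\<lambda>i j. Q $$ (i,j))" using assms unfolding psd_iff_psd_fun by blast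
  then obtain L :: nat and B where B: "\<forall>x<m. \<forall>y<m. Q $$ (x,y) = (\<Sum>l<L. cnj (B l x) * B l y)"
    using psd_fun_gram by blast
  have "id_tensor k m (schur_mult m Q) X $$ (i,j) =
      X $$ (i,j) * (\<Sum>l<L. cnj (B l (i mod m)) * B l (j mod m))"
    if "i < k*m" "j < k*m" for i j
  proof -
    have "0 < m" using that by (cases m) auto
    then have "id_tensor k m (schur_mult m Q) X $$ (i,j) = Q $$ (i mod m, j mod m) * X $$ (i,j)"
      using that by (simp add: id_tensor_def schur_mult_def block_def)
    then show ?thesis using B \<open>0 < m\<close> by (simp add: mult.commute)
  qed
  then have "psd_fun (k*m) (\<lambda>i j. id_tensor k m (schur_mult m Q) X $$ (i,j))"
    using psd_fun_mult_gram[OF X(2), where L = L and b = "\<lambda>l i. B l (i mod m)"]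
    by (auto elim!: psd_fun_cong)
  then show "psd (k*m) (id_tensor k m (schur_mult m Q) X)"
    unfolding psd_iff_psd_fun by (simp add: id_tensor_def)
qed

lemma id_tensor_diag_transfer_blocks:
  assumes "a < k" "b < k" "x < m" "y < m"
  shows "id_tensor k m (diag_transfer m T) X $$ (a*m+x, b*m+y) =
    (if x = y then (\<Sum>z<m. of_real (T x z) * X $$ (a*m+z, b*m+z)) else 0)"
  using assms by (simp add: id_tensor_blocks diag_transfer_def block_def)

lemma completely_positive_diag_transfer:
  assumes T: "\<And>y x. y < m \<Longrightarrow> x < m \<Longrightarrow> 0 \<le> T y x"
  shows "completely_positive m (diag_transfer m T)"
  unfolding completely_positive_def
proof (intro allI impI)
  fix k X assume "psd (k*m) X"
  then have X: "X \<in> carrier_mat (k*m) (k*m)" "psd_fun (k*m) (\<lambda>i j. X $$ (i,j))"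
    unfolding psd_iff_psd_fun by blast+
  define Y where "Y i j = id_tensor k m (diag_transfer m T) X $$ (i,j)" for i j
  have Y_blocks: "Y (a*m+x) (b*m+y) =
      (if x = y then (\<Sum>z<m. of_real (T x z) * X $$ (a*m+z, b*m+z)) else 0)"
    if "a < k" "b < k" "x < m" "y < m" for a b x y
    unfolding Y_def using id_tensor_diag_transfer_blocks[OF that] .
  have HX: "X $$ (a*m+z, b*m+z) = cnj (X $$ (b*m+z, a*m+z))" if "a < k" "b < k" "z < m" for a b z
    using hermitian_funD[OF psd_funD(1)[OF X(2)]] block_index_less that by blast
  have "hermitian_fun (k*m) Y"
  proof (rule hermitian_fun_blocksI)
    fix a b x y assume ab: "a < k" "b < k" and xy: "x < m" "y < m"
    have "(\<Sum>z<m. of_real (T x z) * X $$ (a*m+z, b*m+z))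
        = cnj (\<Sum>z<m. of_real (T x z) * X $$ (b*m+z, a*m+z))"
      unfolding cnj_sum by (intro sum.cong refl) (simp add: HX[OF ab])
    then show "Y (a*m+x) (b*m+y) = cnj (Y (b*m+y) (a*m+x))" using ab xy by (simp add: Y_blocks)
  qed
  moreover have "0 \<le> qform (k*m) Y v" for v
  proof -
    define u where "u x z i = (if i mod m = z then v ((i div m)*m + x) else 0)" for x z i
    define g where "g x z a b = cnj (v (a*m+x)) * X $$ (a*m+z, b*m+z) * v (b*m+x)" for x z a b
    have swap: "(\<Sum>a<k. \<Sum>x<m. \<Sum>b<k. \<Sum>z<m. h a x b z) = (\<Sum>x<m. \<Sum>z<m. \<Sum>a<k. \<Sum>b<k. h a x b z)"
      for h :: "nat \<Rightarrow> nat \<Rightarrow> nat \<Rightarrow> nat \<Rightarrow> complex"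
    proof -
      have "(\<Sum>b<k. \<Sum>z<m. h a x b z) = (\<Sum>z<m. \<Sum>b<k. h a x b z)" for a x by (rule sum.swap)
      moreover have "(\<Sum>a<k. \<Sum>x<m. \<Sum>z<m. \<Sum>b<k. h a x b z) = (\<Sum>x<m. \<Sum>a<k. \<Sum>z<m. \<Sum>b<k. h a x b z)"
        by (rule sum.swap)
      moreover have "(\<Sum>a<k. \<Sum>z<m. \<Sum>b<k. h a x b z) = (\<Sum>z<m. \<Sum>a<k. \<Sum>b<k. h a x b z)" for x
        by (rule sum.swap)
      ultimately show ?thesis by simp
    qed
    have "qform (k*m) Y v = (\<Sum>a<k. \<Sum>x<m. \<Sum>b<k.
        cnj (v (a*m+x)) * (\<Sum>z<m. of_real (T x z) * X $$ (a*m+z, b*m+z)) * v (b*m+x))"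
      unfolding qform_blocks by (intro sum.cong refl) (simp add: Y_blocks sum.delta')
    also have "\<dots> = (\<Sum>a<k. \<Sum>x<m. \<Sum>b<k. \<Sum>z<m. of_real (T x z) * g x z a b)"
      unfolding g_def sum_distrib_left sum_distrib_right
      by (intro sum.cong refl) (simp add: algebra_simps)
    also have "\<dots> = (\<Sum>x<m. \<Sum>z<m. of_real (T x z) * (\<Sum>a<k. \<Sum>b<k. g x z a b))"
      unfolding swap by (simp add: sum_distrib_left)
    also have "\<dots> = (\<Sum>x<m. \<Sum>z<m. of_real (T x z) * qform (k*m) (\<lambda>i j. X $$ (i,j)) (u x z))"
      unfolding qform_blocks u_def g_def by (simp add: sum.delta' sum_if_zero cong: if_cong)
    finally have "qform (k*m) Y v =
        (\<Sum>x<m. \<Sum>z<m. of_real (T x z) * qform (k*m) (\<lambda>i j. X $$ (i,j)) (u x z))" .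
    moreover have "0 \<le> of_real (T x z) * qform (k*m) (\<lambda>i j. X $$ (i,j)) (u x z)"
      if "x < m" "z < m" for x z
      using T[OF that] psd_funD(2)[OF X(2)]
      by (intro mult_nonneg_nonneg) (auto simp: less_eq_complex_def)
    ultimately show ?thesis by (auto intro!: sum_nonneg)
  qed
  ultimately show "psd (k*m) (id_tensor k m (diag_transfer m T) X)"
    unfolding psd_iff_psd_fun psd_fun_def Y_def by (simp add: id_tensor_def)
qed

lemma tt_covariant_schur_transfer:
  "tt_covariant m a (\<lambda>A. schur_mult m Q A + diag_transfer m T A)"
  unfolding tt_covariant_def
proof (intro allI impI)
  fix t :: real and D assume "density m D"
  then have D: "D \<in> carrier_mat m m" by (rule density_carrier)
  define w where "w = phase a t"
  have C: "schur_mult m Q D + diag_transfer m T D \<in> carrier_mat m m" by simp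
  have ww: "w i * cnj (w i) = 1" for i unfolding w_def phase_mult_cnj by simp
  have ww': "w i * (cnj (w i) * X) = X" for i X
    using ww[of i] by (simp add: mult.assoc[symmetric])
  show "schur_mult m Q (evol m a t * D * adj (evol m a t))
        + diag_transfer m T (evol m a t * D * adj (evol m a t))
      = evol m a t * (schur_mult m Q D + diag_transfer m T D) * adj (evol m a t)"
    unfolding evol_conj[OF D] evol_conj[OF C] w_def[symmetric]
    by (intro eq_matI) (auto simp: schur_mult_def diag_transfer_def ww' algebra_simps)
qed

lemma transport_plan_exists:
  fixes e f :: "nat \<Rightarrow> real"
  assumes e: "\<And>x. x < m \<Longrightarrow> 0 \<le> e x" and f: "\<And>y. y < m \<Longrightarrow> 0 \<le> f y"
    and mass: "(\<Sum>x<m. e x) = (\<Sum>y<m. f y)"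
  obtains P where "\<And>y x. 0 \<le> P y x" "\<And>x. x < m \<Longrightarrow> (\<Sum>y<m. P y x) = e x"
    "\<And>y. y < m \<Longrightarrow> (\<Sum>x<m. P y x) = f y"
proof -
  define F where "F = (\<Sum>x<m. e x)"
  define P where "P y x = (if x < m \<and> y < m then e x * f y / F else 0)" for y x
  have "0 \<le> F" unfolding F_def using e by (intro sum_nonneg) auto
  have e0: "e x = 0" and f0: "f x = 0" if "F = 0" "x < m" for x
    using that e f mass sum_nonneg_eq_0_iff[of "{..<m}" e] sum_nonneg_eq_0_iff[of "{..<m}" f]
    unfolding F_def by auto
  show ?thesis
  proof (rule that[of P])
    show "0 \<le> P y x" for y x
      unfolding P_def using e f \<open>0 \<le> F\<close> by simp
    show "(\<Sum>y<m. P y x) = e x" if "x < m" for x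
    proof -
      have "(\<Sum>y<m. P y x) = e x / F * (\<Sum>y<m. f y)"
        unfolding P_def sum_distrib_left using that by (intro sum.cong) auto
      then show ?thesis using e0[OF _ that] mass unfolding F_def by auto
    qed
    show "(\<Sum>x<m. P y x) = f y" if "y < m" for y
    proof -
      have "(\<Sum>x<m. P y x) = f y / F * (\<Sum>x<m. e x)"
        unfolding P_def sum_distrib_left using that by (intro sum.cong) auto
      then show ?thesis using f0[OF _ that] unfolding F_def by auto
    qed
  qed
qed

lemma stochastic_completion:
  fixes r s d :: "nat \<Rightarrow> real"
  assumes r: "\<And>x. x < m \<Longrightarrow> 0 < r x" and d: "\<And>x. x < m \<Longrightarrow> d x \<le> 1"
    and dr_le_s: "\<And>x. x < m \<Longrightarrow> d x * r x \<le> s x" and mass: "(\<Sum>x<m. r x) = (\<Sum>x<m. s x)"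
  obtains T where "\<And>y x. x < m \<Longrightarrow> 0 \<le> T y x"
    "\<And>x. x < m \<Longrightarrow> d x + (\<Sum>y<m. T y x) = 1"
    "\<And>y. y < m \<Longrightarrow> d y * r y + (\<Sum>x<m. T y x * r x) = s y"
proof -
  have "0 \<le> r x - d x * r x" if "x < m" for x
    using r[OF that] d[OF that] by (simp add: mult_left_le_one_le)
  moreover have "0 \<le> s y - d y * r y" if "y < m" for y
    using dr_le_s[OF that] by simp
  moreover have "(\<Sum>x<m. r x - d x * r x) = (\<Sum>y<m. s y - d y * r y)"
    using mass by (simp add: sum_subtractf)
  ultimately obtain P where P: "\<And>y x. 0 \<le> P y x" "\<And>x. x < m \<Longrightarrow> (\<Sum>y<m. P y x) = r x - d x * r x"
    "\<And>y. y < m \<Longrightarrow> (\<Sum>x<m. P y x) = s y - d y * r y"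
    using transport_plan_exists[of m "\<lambda>x. r x - d x * r x" "\<lambda>y. s y - d y * r y"] by auto
  show ?thesis
  proof (rule that[of "\<lambda>y x. P y x / r x"])
    show "0 \<le> P y x / r x" if "x < m" for y x
      using P(1) r[OF that] by simp
    show "d x + (\<Sum>y<m. P y x / r x) = 1" if "x < m" for x
      using P(2)[OF that] r[OF that] by (simp flip: sum_divide_distrib) (simp add: field_simps)
    show "d y * r y + (\<Sum>x<m. P y x / r x * r x) = s y" if "y < m" for y
    proof -
      have "(\<Sum>x<m. P y x / r x * r x) = (\<Sum>x<m. P y x)"
        by (intro sum.cong refl) (simp add: less_imp_neq[OF r, symmetric])
      then show ?thesis using P(3)[OF that] by simp
    qed
  qed
qed

lemma schur_transfer_channel:
  assumes Q: "psd m Q" and T: "\<And>y x. y < m \<Longrightarrow> x < m \<Longrightarrow> 0 \<le> T y x"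
    and col: "\<And>x. x < m \<Longrightarrow> Q $$ (x,x) + (\<Sum>y<m. of_real (T y x)) = 1"
  shows "channel m (\<lambda>A. schur_mult m Q A + diag_transfer m T A)"
proof -
  have "mtrace (schur_mult m Q A + diag_transfer m T A) = mtrace A" if "A \<in> carrier_mat m m" for A
  proof -
    have "mtrace (schur_mult m Q A + diag_transfer m T A)
        = mtrace (schur_mult m Q A) + mtrace (diag_transfer m T A)"
      unfolding mtrace_def by (simp add: sum.distrib)
    also have "\<dots> = (\<Sum>x<m. (Q $$ (x,x) + (\<Sum>y<m. of_real (T y x))) * A $$ (x,x))"
      unfolding mtrace_schur_mult mtrace_diag_transfer by (simp add: distrib_right sum.distrib)
    also have "\<dots> = mtrace A" unfolding mtrace_def using that col by simp
    finally show ?thesis .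
  qed
  then show ?thesis
    unfolding channel_def
    using linear_on_add[OF linear_on_schur_mult linear_on_diag_transfer]
      completely_positive_add[OF completely_positive_schur_mult[OF Q]
        completely_positive_diag_transfer[OF T]]
    by simp
qed

lemma Qmat_psd_imp_covariant_channel:
  assumes dr: "density m \<rho>" and ds: "density m \<sigma>"
    and nz: "\<forall>x<m. \<forall>x'<m. \<rho> $$ (x,x') \<noteq> 0" and PQ: "psd m (Qmat m \<rho> \<sigma>)"
  shows "\<exists>E. channel m E \<and> tt_covariant m a E \<and> \<sigma> = E \<rho>"
proof -
  define Q where "Q = Qmat m \<rho> \<sigma>"
  define r where "r x = Re (\<rho> $$ (x,x))" for x
  define s where "s x = Re (\<sigma> $$ (x,x))" for x
  define d where "d x = min 1 (s x / r x)" for x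
  have \<rho>_diag: "\<rho> $$ (x,x) = of_real (r x)" and \<sigma>_diag: "\<sigma> $$ (x,x) = of_real (s x)"
    if "x < m" for x
    unfolding r_def s_def using complex_nonneg_eq_Re density_diag_nonneg dr ds that by blast+
  have r_pos: "0 < r x" if "x < m" for x
    using density_diag_nonneg[OF dr that] nz[rule_format, OF that that] unfolding \<rho>_diag[OF that]
    by (auto simp: less_eq_complex_def)
  have Q_diag: "Q $$ (x,x) = of_real (d x)" if "x < m" for x
    unfolding Q_def Qmat_def d_def r_def s_def using that by simp
  obtain T where T: "\<And>y x. x < m \<Longrightarrow> 0 \<le> T y x" "\<And>x. x < m \<Longrightarrow> d x + (\<Sum>y<m. T y x) = 1"
    "\<And>y. y < m \<Longrightarrow> d y * r y + (\<Sum>x<m. T y x * r x) = s y"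
  proof (rule stochastic_completion)
    show "d x * r x \<le> s x" if "x < m" for x
      using r_pos[OF that] unfolding d_def by (simp add: min_def field_simps)
    show "(\<Sum>x<m. r x) = (\<Sum>x<m. s x)"
      using density_Re_diag_sum[OF dr] density_Re_diag_sum[OF ds] unfolding r_def s_def by simp
  qed (use r_pos d_def in auto)
  define E where "E A = schur_mult m Q A + diag_transfer m T A" for A
  have "channel m E"
    unfolding E_def
  proof (rule schur_transfer_channel)
    show "Q $$ (x,x) + (\<Sum>y<m. of_real (T y x)) = 1" if "x < m" for x
      using T(2)[OF that] unfolding Q_diag[OF that] by (simp flip: of_real_sum of_real_add)
  qed (use PQ T(1) in \<open>simp_all add: Q_def\<close>)
  moreover have "\<sigma> $$ (y,y') = E \<rho> $$ (y,y')" if y: "y < m" "y' < m" for y y'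
  proof (cases "y = y'")
    case True
    have "E \<rho> $$ (y,y) = of_real (d y) * \<rho> $$ (y,y) + (\<Sum>x<m. of_real (T y x) * \<rho> $$ (x,x))"
      unfolding E_def schur_mult_def diag_transfer_def using y Q_diag by simp
    also have "\<dots> = of_real (d y * r y + (\<Sum>x<m. T y x * r x))"
      using y \<rho>_diag by simp
    also have "\<dots> = \<sigma> $$ (y,y)" using T(3)[OF y(1)] \<sigma>_diag[OF y(1)] by simp
    finally show ?thesis using True by simp
  next
    case False
    then show ?thesis
      using y nz unfolding E_def Q_def schur_mult_def diag_transfer_def Qmat_def by simp
  qed
  then have "\<sigma> = E \<rho>"
    using density_carrier[OF ds] by (intro eq_matI) (simp_all add: E_def)
  ultimately show ?thesis
    using tt_covariant_schur_transfer[of m a Q T] unfolding E_def[abs_def] by blast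
qed

theorem theorem3:
  fixes m :: nat and a :: "nat \<Rightarrow> real" and \<rho> \<sigma> :: "complex mat"
  assumes "nondeg_bohr m a"
    and "density m \<rho>" and "density m \<sigma>"
    and "\<forall>x<m. \<forall>x'<m. \<rho> $$ (x,x') \<noteq> 0"
  shows "(\<exists>E. channel m E \<and> tt_covariant m a E \<and> \<sigma> = E \<rho>) \<longleftrightarrow> psd m (Qmat m \<rho> \<sigma>)"
proof
  assume "\<exists>E. channel m E \<and> tt_covariant m a E \<and> \<sigma> = E \<rho>"
  then show "psd m (Qmat m \<rho> \<sigma>)" using tt_covariant_channel_Qmat_psd assms by blast
next
  assume "psd m (Qmat m \<rho> \<sigma>)"
  then show "\<exists>E. channel m E \<and> tt_covariant m a E \<and> \<sigma> = E \<rho>"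
    using Qmat_psd_imp_covariant_channel assms(2-4) by blast
qed

end
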